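(* For any $P,Q\in\mathcal{PP}(n)$, $P\leq Q$ if and only if $\iota(Q)\leq\iota(P)$.
   Context: A plane poset is a finite set with two partial orders $\leq_h,\leq_r$ such that two distinct elements are $\leq_h$-comparable iff they are not $\leq_r$-comparable; $\mathcal{PP}(n)$ is the set of isomorphism classes of plane posets with $n$ elements. On a plane poset, $x\leq y$ iff ($x\leq_h y$ or $x\leq_r y$) is a total order (known fact). For $P,Q\in\mathcal{PP}(n)$, $\theta_{P,Q}$ is the increasing bijection $P\to Q$, and $P\leq Q$ means: for all $x,y\in P$, $\theta_{P,Q}(x)\leq_h\theta_{P,Q}(y)$ in $Q$ implies $x\leq_h y$ in $P$. For a plane poset $P=(P,\leq_h,\leq_r)$, $\iota(P)=(P,\leq_r,\leq_h)$ (the two orders exchanged); it is again a plane poset and $\iota$ is an involution. *)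

theory Defs
  imports Main "HOL-Library.FuncSet"
begin

text \<open>A plane poset is represented concretely as a triple (carrier, heap order, right order);
  orders are relations given as sets of pairs.  Isomorphism classes are handled by working
  with arbitrary representatives (all notions below are invariant under isomorphism).\<close>

type_synonym 'a pposet = "'a set \<times> 'a rel \<times> 'a rel"

definition carrier_pp :: "'a pposet \<Rightarrow> 'a set" where "carrier_pp P = fst P"
definition hord :: "'a pposet \<Rightarrow> 'a rel" where "hord P = fst (snd P)"
definition rord :: "'a pposet \<Rightarrow> 'a rel" where "rord P = snd (snd P)"

definition plane_poset :: "'a pposet \<Rightarrow> bool" where
  "plane_poset P \<longleftrightarrow> finite (carrier_pp P)
     \<and> partial_order_on (carrier_pp P) (hord P)
     \<and> partial_order_on (carrier_pp P) (rord P)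
     \<and> (\<forall>x\<in>carrier_pp P. \<forall>y\<in>carrier_pp P. x \<noteq> y \<longrightarrow>
          (((x, y) \<in> hord P \<or> (y, x) \<in> hord P) \<longleftrightarrow> \<not> ((x, y) \<in> rord P \<or> (y, x) \<in> rord P)))"

definition tord :: "'a pposet \<Rightarrow> 'a rel" where "tord P = hord P \<union> rord P"

definition iota :: "'a pposet \<Rightarrow> 'a pposet" where
  "iota P = (carrier_pp P, rord P, hord P)"

definition theta :: "'a pposet \<Rightarrow> 'b pposet \<Rightarrow> ('a \<Rightarrow> 'b)" where
  "theta P Q = (THE f. f \<in> extensional (carrier_pp P)
      \<and> bij_betw f (carrier_pp P) (carrier_pp Q)
      \<and> (\<forall>x\<in>carrier_pp P. \<forall>y\<in>carrier_pp P. (x, y) \<in> tord P \<longrightarrow> (f x, f y) \<in> tord Q))"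

definition pp_le :: "'a pposet \<Rightarrow> 'b pposet \<Rightarrow> bool" where
  "pp_le P Q \<longleftrightarrow> (\<forall>x\<in>carrier_pp P. \<forall>y\<in>carrier_pp P.
      (theta P Q x, theta P Q y) \<in> hord Q \<longrightarrow> (x, y) \<in> hord P)"

end

theory Submission
  imports Defs
begin

text \<open>In a plane poset two distinct elements are related by exactly one of the two orders, and
  their union \<open>tord\<close> is a linear order. Hence \<open>theta P Q\<close> is the unique isomorphism of finite
  chains (it matches elements of equal rank), \<open>theta Q P\<close> is its inverse, and \<open>iota\<close> does not
  change the chain. So \<open>iota Q \<le> iota P\<close> says that \<open>theta P Q\<close> preserves the right order; since
  \<open>theta P Q\<close> preserves the chain, which on distinct elements is the disjoint union of the two
  strict orders, this is equivalent to \<open>theta P Q\<close> reflecting the heap order, i.e. to \<open>P \<le> Q\<close>.\<close>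

definition order_rank :: "'a rel \<Rightarrow> 'a \<Rightarrow> nat" where
  "order_rank r x = card (underS r x)"

lemma underS_subset_field:
  assumes "linear_order_on A r"
  shows "underS r x \<subseteq> A"
  using assms unfolding linear_order_on_def partial_order_on_def preorder_on_def underS_def
  by blast

lemma order_rank_less:
  assumes lo: "linear_order_on A r" and fin: "finite A"
    and xy: "(x, y) \<in> r" "x \<noteq> y"
  shows "order_rank r x < order_rank r y"
proof -
  have "trans r" "antisym r"
    using lo unfolding linear_order_on_def partial_order_on_def preorder_on_def by auto
  then have "underS r x \<subset> underS r y"
    using xy unfolding underS_def by (auto dest: transD antisymD)
  moreover have "finite (underS r y)"
    using finite_subset[OF underS_subset_field[OF lo] fin] .
  ultimately show ?thesis
    unfolding order_rank_def by (rule psubset_card_mono[rotated])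
qed

lemma order_rank_le_iff:
  assumes lo: "linear_order_on A r" and fin: "finite A" and x: "x \<in> A" and y: "y \<in> A"
  shows "(x, y) \<in> r \<longleftrightarrow> order_rank r x \<le> order_rank r y"
proof
  assume "(x, y) \<in> r"
  then show "order_rank r x \<le> order_rank r y"
    using order_rank_less[OF lo fin] by (cases "x = y") (auto intro: less_imp_le)
next
  assume le: "order_rank r x \<le> order_rank r y"
  show "(x, y) \<in> r"
  proof (rule ccontr)
    assume xy: "(x, y) \<notin> r"
    have "refl_on A r" "total_on A r"
      using lo unfolding linear_order_on_def partial_order_on_def preorder_on_def by auto
    with x y xy have "(y, x) \<in> r" "y \<noteq> x"
      unfolding refl_on_def total_on_def by metis+
    with le show False
      using order_rank_less[OF lo fin] by fastforce
  qed
qed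

lemma inj_on_order_rank:
  assumes lo: "linear_order_on A r" and fin: "finite A"
  shows "inj_on (order_rank r) A"
proof (rule inj_onI)
  fix x y assume "x \<in> A" "y \<in> A" "order_rank r x = order_rank r y"
  then have "(x, y) \<in> r" "(y, x) \<in> r"
    using order_rank_le_iff[OF lo fin] by auto
  then show "x = y"
    using lo unfolding linear_order_on_def partial_order_on_def by (auto dest: antisymD)
qed

lemma bij_betw_order_rank:
  assumes lo: "linear_order_on A r" and fin: "finite A"
  shows "bij_betw (order_rank r) A {..<card A}"
proof -
  have "order_rank r x < card A" if "x \<in> A" for x
  proof -
    have "underS r x \<subset> A"
      using underS_subset_field[OF lo] that unfolding underS_def by blast
    then show ?thesis
      unfolding order_rank_def using fin by (rule psubset_card_mono[rotated])
  qed
  then have "order_rank r ` A \<subseteq> {..<card A}" by auto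
  moreover have "card (order_rank r ` A) = card {..<card A}"
    using card_image[OF inj_on_order_rank[OF lo fin]] by simp
  ultimately have "order_rank r ` A = {..<card A}"
    by (simp add: card_subset_eq)
  then show ?thesis
    using inj_on_order_rank[OF lo fin] unfolding bij_betw_def by blast
qed

definition increasing_bij :: "'a set \<Rightarrow> 'a rel \<Rightarrow> 'b set \<Rightarrow> 'b rel \<Rightarrow> ('a \<Rightarrow> 'b) \<Rightarrow> bool" where
  "increasing_bij A r B s f \<longleftrightarrow> f \<in> extensional A \<and> bij_betw f A B
     \<and> (\<forall>x\<in>A. \<forall>y\<in>A. (x, y) \<in> r \<longrightarrow> (f x, f y) \<in> s)"

lemma increasing_bij_reflects:
  assumes lo_r: "linear_order_on A r" and lo_s: "linear_order_on B s"
    and f: "increasing_bij A r B s f"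
    and "x \<in> A" "y \<in> A" "(f x, f y) \<in> s"
  shows "(x, y) \<in> r"
proof (rule ccontr)
  assume "(x, y) \<notin> r"
  moreover have "refl_on A r" "total_on A r"
    using lo_r unfolding linear_order_on_def partial_order_on_def preorder_on_def by auto
  ultimately have "(y, x) \<in> r" "x \<noteq> y"
    using assms(4,5) unfolding refl_on_def total_on_def by metis+
  then have "(f y, f x) \<in> s" "f x \<noteq> f y"
    using f assms(4,5) unfolding increasing_bij_def bij_betw_def inj_on_def by blast+
  with \<open>(f x, f y) \<in> s\<close> lo_s show False
    unfolding linear_order_on_def partial_order_on_def by (auto dest: antisymD)
qed

lemma order_rank_increasing_bij:
  assumes lo_r: "linear_order_on A r" and lo_s: "linear_order_on B s"
    and f: "increasing_bij A r B s f" and x: "x \<in> A"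
  shows "order_rank s (f x) = order_rank r x"
proof -
  have bij: "bij_betw f A B"
    using f unfolding increasing_bij_def by blast
  have "f ` underS r x = underS s (f x)"
  proof
    show "f ` underS r x \<subseteq> underS s (f x)"
    proof
      fix z assume "z \<in> f ` underS r x"
      then obtain y where y: "y \<in> underS r x" "z = f y" by blast
      then have "y \<in> A" "(y, x) \<in> r" "y \<noteq> x"
        using underS_subset_field[OF lo_r] unfolding underS_def by auto
      with f x have "(f y, f x) \<in> s" "f y \<noteq> f x"
        unfolding increasing_bij_def bij_betw_def inj_on_def by blast+
      with y show "z \<in> underS s (f x)"
        unfolding underS_def by simp
    qed
    show "underS s (f x) \<subseteq> f ` underS r x"
    proof
      fix z assume z: "z \<in> underS s (f x)"
      then obtain y where y: "y \<in> A" "z = f y"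
        using underS_subset_field[OF lo_s] bij unfolding bij_betw_def by blast
      with z have "(y, x) \<in> r" "y \<noteq> x"
        using increasing_bij_reflects[OF lo_r lo_s f y(1) x] unfolding underS_def by auto
      with y show "z \<in> f ` underS r x"
        unfolding underS_def by blast
    qed
  qed
  moreover have "inj_on f (underS r x)"
    using bij underS_subset_field[OF lo_r] unfolding bij_betw_def by (blast intro: inj_on_subset)
  ultimately show ?thesis
    unfolding order_rank_def by (metis card_image)
qed

lemma increasing_bij_unique:
  assumes lo_r: "linear_order_on A r" and lo_s: "linear_order_on B s" and fin: "finite B"
    and f: "increasing_bij A r B s f" and g: "increasing_bij A r B s g"
  shows "f = g"
proof (rule extensionalityI)
  show "f \<in> extensional A" "g \<in> extensional A"
    using f g unfolding increasing_bij_def by auto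
  fix x assume x: "x \<in> A"
  have "f x \<in> B" "g x \<in> B"
    using f g x unfolding increasing_bij_def bij_betw_def by auto
  moreover have "order_rank s (f x) = order_rank s (g x)"
    using order_rank_increasing_bij[OF lo_r lo_s f x] order_rank_increasing_bij[OF lo_r lo_s g x]
    by simp
  ultimately show "f x = g x"
    using inj_on_order_rank[OF lo_s fin] by (auto dest: inj_onD)
qed

lemma increasing_bij_exists:
  assumes lo_r: "linear_order_on A r" and lo_s: "linear_order_on B s"
    and fin: "finite A" and finB: "finite B" and card: "card A = card B"
  shows "\<exists>f. increasing_bij A r B s f"
proof -
  let ?h = "the_inv_into B (order_rank s)"
  define f where "f = restrict (\<lambda>x. ?h (order_rank r x)) A"
  have bij_r: "bij_betw (order_rank r) A {..<card A}"
    using bij_betw_order_rank[OF lo_r fin] .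
  have bij_s: "bij_betw (order_rank s) B {..<card A}"
    using bij_betw_order_rank[OF lo_s finB] card by simp
  have "bij_betw (?h \<circ> order_rank r) A B"
    using bij_betw_trans[OF bij_r bij_betw_the_inv_into[OF bij_s]] .
  then have bij: "bij_betw f A B"
    unfolding f_def by (rule bij_betw_cong[THEN iffD1, rotated]) simp
  have rank_f: "order_rank s (f x) = order_rank r x" if "x \<in> A" for x
    using that bij_betwE[OF bij_r] f_the_inv_into_f_bij_betw[OF bij_s] unfolding f_def by simp
  have "(f x, f y) \<in> s" if "x \<in> A" "y \<in> A" "(x, y) \<in> r" for x y
    using that bij_betwE[OF bij] rank_f order_rank_le_iff[OF lo_r fin] order_rank_le_iff[OF lo_s finB]
    by simp
  then have "increasing_bij A r B s f"
    using bij unfolding increasing_bij_def f_def by simp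
  then show ?thesis by blast
qed

lemma increasing_bij_inverse:
  assumes lo_r: "linear_order_on A r" and lo_s: "linear_order_on B s" and fin: "finite A"
    and f: "increasing_bij A r B s f" and g: "increasing_bij B s A r g" and x: "x \<in> A"
  shows "g (f x) = x"
proof -
  have fx: "f x \<in> B"
    using f x unfolding increasing_bij_def bij_betw_def by blast
  then have "g (f x) \<in> A"
    using g unfolding increasing_bij_def bij_betw_def by blast
  moreover have "order_rank r (g (f x)) = order_rank r x"
    using order_rank_increasing_bij[OF lo_s lo_r g fx] order_rank_increasing_bij[OF lo_r lo_s f x]
    by simp
  ultimately show ?thesis
    using inj_on_order_rank[OF lo_r fin] x by (auto dest: inj_onD)
qed

lemma theta_increasing_bij:
  assumes lo_P: "linear_order_on (carrier_pp P) (tord P)"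
    and lo_Q: "linear_order_on (carrier_pp Q) (tord Q)"
    and fin: "finite (carrier_pp P)" "finite (carrier_pp Q)"
    and card: "card (carrier_pp P) = card (carrier_pp Q)"
  shows "increasing_bij (carrier_pp P) (tord P) (carrier_pp Q) (tord Q) (theta P Q)"
proof -
  obtain f where f: "increasing_bij (carrier_pp P) (tord P) (carrier_pp Q) (tord Q) f"
    using increasing_bij_exists[OF lo_P lo_Q fin card] by blast
  have "theta P Q = f"
    unfolding theta_def increasing_bij_def[symmetric]
    using f increasing_bij_unique[OF lo_P lo_Q fin(2) _ f] by (rule the_equality)
  with f show ?thesis by simp
qed

lemma plane_poset_comparable_iff:
  assumes "plane_poset P" "x \<in> carrier_pp P" "y \<in> carrier_pp P" "x \<noteq> y"
  shows "((x, y) \<in> hord P \<or> (y, x) \<in> hord P) \<longleftrightarrow> \<not> ((x, y) \<in> rord P \<or> (y, x) \<in> rord P)"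
  using assms unfolding plane_poset_def by blast

lemma plane_poset_partial_orders:
  assumes "plane_poset P"
  shows "partial_order_on (carrier_pp P) (hord P)" "partial_order_on (carrier_pp P) (rord P)"
  using assms unfolding plane_poset_def by auto

lemma iota_simps [simp]:
  "carrier_pp (iota P) = carrier_pp P" "hord (iota P) = rord P" "rord (iota P) = hord P"
  by (simp_all add: iota_def carrier_pp_def hord_def rord_def)

lemma tord_iota [simp]: "tord (iota P) = tord P"
  unfolding tord_def by (simp add: Un_commute)

lemma theta_iota: "theta (iota Q) (iota P) = theta Q P"
  unfolding theta_def by simp

lemma plane_poset_iota: "plane_poset P \<Longrightarrow> plane_poset (iota P)"
  unfolding plane_poset_def by auto

lemma tord_trans_hord_rord:
  assumes P: "plane_poset P" and xy: "(x, y) \<in> hord P" and yz: "(y, z) \<in> rord P"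
  shows "(x, z) \<in> tord P"
proof (rule ccontr)
  assume xz: "(x, z) \<notin> tord P"
  have po: "partial_order_on (carrier_pp P) (hord P)" "partial_order_on (carrier_pp P) (rord P)"
    using plane_poset_partial_orders[OF P] .
  then have C: "x \<in> carrier_pp P" "y \<in> carrier_pp P" "z \<in> carrier_pp P"
    using xy yz unfolding partial_order_on_def preorder_on_def by auto
  have "x \<noteq> z" "x \<noteq> y" "y \<noteq> z"
    using xz xy yz po C(1) unfolding tord_def partial_order_on_def preorder_on_def refl_on_def
    by auto
  then have "(z, x) \<in> hord P \<or> (z, x) \<in> rord P"
    using xz plane_poset_comparable_iff[OF P C(1,3)] unfolding tord_def by blast
  then show False
  proof
    assume "(z, x) \<in> hord P"
    with xy po have "(z, y) \<in> hord P"
      unfolding partial_order_on_def preorder_on_def by (blast dest: transD)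
    with yz show False
      using plane_poset_comparable_iff[OF P C(2,3) \<open>y \<noteq> z\<close>] by blast
  next
    assume "(z, x) \<in> rord P"
    with yz po have "(y, x) \<in> rord P"
      unfolding partial_order_on_def preorder_on_def by (blast dest: transD)
    with xy show False
      using plane_poset_comparable_iff[OF P C(1,2) \<open>x \<noteq> y\<close>] by blast
  qed
qed

lemma linear_order_on_tord:
  assumes P: "plane_poset P"
  shows "linear_order_on (carrier_pp P) (tord P)"
proof -
  let ?C = "carrier_pp P"
  have po: "partial_order_on ?C (hord P)" "partial_order_on ?C (rord P)"
    using plane_poset_partial_orders[OF P] .
  then have sub: "hord P \<subseteq> ?C \<times> ?C" "rord P \<subseteq> ?C \<times> ?C"
    and trans: "trans (hord P)" "trans (rord P)"
    and antisym: "antisym (hord P)" "antisym (rord P)"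
    and refl: "refl_on ?C (hord P)"
    unfolding partial_order_on_def preorder_on_def by auto
  have "tord P \<subseteq> ?C \<times> ?C" "refl_on ?C (tord P)"
    using sub refl unfolding tord_def refl_on_def by auto
  moreover have "trans (tord P)"
  proof (rule transI)
    fix x y z assume xy: "(x, y) \<in> tord P" and yz: "(y, z) \<in> tord P"
    have "(x, z) \<in> tord P" if "(x, y) \<in> hord P" "(y, z) \<in> hord P"
      using that trans(1) unfolding tord_def by (blast dest: transD)
    moreover have "(x, z) \<in> tord P" if "(x, y) \<in> rord P" "(y, z) \<in> rord P"
      using that trans(2) unfolding tord_def by (blast dest: transD)
    moreover have "(x, z) \<in> tord P" if "(x, y) \<in> hord P" "(y, z) \<in> rord P"
      using tord_trans_hord_rord[OF P that] .
    moreover have "(x, z) \<in> tord P" if "(x, y) \<in> rord P" "(y, z) \<in> hord P"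
      \<comment> \<open>the previous case, read in \<open>iota P\<close>\<close>
      using tord_trans_hord_rord[OF plane_poset_iota[OF P]] that by simp
    ultimately show "(x, z) \<in> tord P"
      using xy yz unfolding tord_def by blast
  qed
  moreover have "antisym (tord P)"
  proof (rule antisymI)
    fix x y assume xy: "(x, y) \<in> tord P" and yx: "(y, x) \<in> tord P"
    show "x = y"
    proof (rule ccontr)
      assume "x \<noteq> y"
      moreover have "x \<in> ?C" "y \<in> ?C"
        using xy sub unfolding tord_def by auto
      ultimately show False
        using xy yx antisym plane_poset_comparable_iff[OF P] unfolding tord_def
        by (blast dest: antisymD)
    qed
  qed
  moreover have "total_on ?C (tord P)"
    using plane_poset_comparable_iff[OF P] unfolding total_on_def tord_def by blast
  ultimately show ?thesis
    unfolding linear_order_on_def partial_order_on_def preorder_on_def by blast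
qed

lemma reflects_hord_iff_preserves_rord:
  assumes P: "plane_poset P" and Q: "plane_poset Q"
    and f: "increasing_bij (carrier_pp P) (tord P) (carrier_pp Q) (tord Q) f"
  shows "(\<forall>x\<in>carrier_pp P. \<forall>y\<in>carrier_pp P. (f x, f y) \<in> hord Q \<longrightarrow> (x, y) \<in> hord P)
     \<longleftrightarrow> (\<forall>x\<in>carrier_pp P. \<forall>y\<in>carrier_pp P. (x, y) \<in> rord P \<longrightarrow> (f x, f y) \<in> rord Q)"
    (is "?reflects \<longleftrightarrow> ?preserves")
proof
  have mono: "(f x, f y) \<in> tord Q" if "x \<in> carrier_pp P" "y \<in> carrier_pp P" "(x, y) \<in> tord P" for x y
    using f that unfolding increasing_bij_def by blast
  have inj: "inj_on f (carrier_pp P)" and into: "f ` carrier_pp P \<subseteq> carrier_pp Q"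
    using f unfolding increasing_bij_def bij_betw_def by auto
  show ?preserves if reflects: ?reflects
  proof (intro ballI impI)
    fix x y assume x: "x \<in> carrier_pp P" and y: "y \<in> carrier_pp P" and r: "(x, y) \<in> rord P"
    show "(f x, f y) \<in> rord Q"
    proof (cases "x = y")
      case True
      then show ?thesis
        using plane_poset_partial_orders(2)[OF Q] into x
        unfolding partial_order_on_def preorder_on_def refl_on_def by blast
    next
      case False
      have "(f x, f y) \<notin> hord Q"
        using reflects x y r plane_poset_comparable_iff[OF P x y False] by blast
      with mono[OF x y] r show ?thesis
        unfolding tord_def by blast
    qed
  qed
  show ?reflects if preserves: ?preserves
  proof (intro ballI impI)
    fix x y assume x: "x \<in> carrier_pp P" and y: "y \<in> carrier_pp P" and h: "(f x, f y) \<in> hord Q"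
    show "(x, y) \<in> hord P"
    proof (cases "x = y")
      case True
      then show ?thesis
        using plane_poset_partial_orders(1)[OF P] x
        unfolding partial_order_on_def preorder_on_def refl_on_def by blast
    next
      case False
      with inj x y have "f x \<noteq> f y"
        by (auto dest: inj_onD)
      with h preserves x y have "(x, y) \<notin> rord P" "(y, x) \<notin> rord P"
        using plane_poset_comparable_iff[OF Q] into by blast+
      then have "(x, y) \<in> hord P \<or> (y, x) \<in> hord P"
        using plane_poset_comparable_iff[OF P x y False] by blast
      moreover have "(x, y) \<in> tord P"
        using increasing_bij_reflects[OF linear_order_on_tord[OF P] linear_order_on_tord[OF Q] f x y] h
        unfolding tord_def by blast
      ultimately show ?thesis
        using False linear_order_on_tord[OF P]
        unfolding tord_def linear_order_on_def partial_order_on_def by (blast dest: antisymD)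
    qed
  qed
qed

lemma pp_le_iota_iff:
  assumes P: "plane_poset P" and Q: "plane_poset Q"
    and card: "card (carrier_pp P) = card (carrier_pp Q)"
  shows "pp_le (iota Q) (iota P) \<longleftrightarrow>
    (\<forall>x\<in>carrier_pp P. \<forall>y\<in>carrier_pp P. (x, y) \<in> rord P \<longrightarrow> (theta P Q x, theta P Q y) \<in> rord Q)"
proof -
  have lo: "linear_order_on (carrier_pp P) (tord P)" "linear_order_on (carrier_pp Q) (tord Q)"
    using linear_order_on_tord[OF P] linear_order_on_tord[OF Q] .
  have fin: "finite (carrier_pp P)" "finite (carrier_pp Q)"
    using P Q unfolding plane_poset_def by blast+
  have f: "increasing_bij (carrier_pp P) (tord P) (carrier_pp Q) (tord Q) (theta P Q)"
    and g: "increasing_bij (carrier_pp Q) (tord Q) (carrier_pp P) (tord P) (theta Q P)"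
    using theta_increasing_bij[OF lo fin card]
      theta_increasing_bij[OF lo(2,1) fin(2,1) card[symmetric]] .
  have "carrier_pp Q = theta P Q ` carrier_pp P"
    using f unfolding increasing_bij_def bij_betw_def by blast
  moreover have "theta Q P (theta P Q x) = x" if "x \<in> carrier_pp P" for x
    using increasing_bij_inverse[OF lo fin(1) f g that] .
  ultimately show ?thesis
    unfolding pp_le_def theta_iota iota_simps by simp
qed

theorem proposition18:
  fixes P :: "'a pposet" and Q :: "'b pposet" and n :: nat
  assumes "plane_poset P" and "plane_poset Q"
    and "card (carrier_pp P) = n" and "card (carrier_pp Q) = n"
  shows "pp_le P Q \<longleftrightarrow> pp_le (iota Q) (iota P)"
proof -
  have card: "card (carrier_pp P) = card (carrier_pp Q)"
    using assms(3,4) by simp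
  have fin: "finite (carrier_pp P)" "finite (carrier_pp Q)"
    using assms(1,2) unfolding plane_poset_def by blast+
  have "increasing_bij (carrier_pp P) (tord P) (carrier_pp Q) (tord Q) (theta P Q)"
    using theta_increasing_bij[OF linear_order_on_tord[OF assms(1)] linear_order_on_tord[OF assms(2)]
        fin card] .
  from reflects_hord_iff_preserves_rord[OF assms(1,2) this]
  show ?thesis
    unfolding pp_le_iota_iff[OF assms(1,2) card] by (simp only: pp_le_def)
qed

end
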